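(* Let $k\ge 3$. Then $\displaystyle\lim_{n\to\infty}\frac{M_k(n)-L_k(n)}{L_k(n)}=0$, where $L_k(n)=|\mathbf{S}_k(n)|$.
   Context: Let $\Sigma=\{0,1,\dots,k-1\}$. Strings are compared lexicographically ($\alpha<\beta$ if $\alpha$ is a proper prefix of $\beta$, or $\alpha$ has the smaller symbol at the first index where they differ). For $\alpha=a_1\cdots a_n$, $\alpha^R=a_n\cdots a_1$; $[\alpha]$ is the set of rotations of $\alpha$. $\alpha$ is a necklace if it is the lexicographically smallest element of $[\alpha]$; a bracelet if it is the lexicographically smallest element of $[\alpha]\cup[\alpha^R]$. A necklace $\alpha$ is symmetric if $\alpha^R\in[\alpha]$, asymmetric otherwise. $\mathbf{A}_k(n)$ is the set of asymmetric bracelets of length $n$ over $\Sigma$, and $\mathbf{S}_k(n)=\bigcup_{\alpha\in\mathbf{A}_k(n)}[\alpha]$. A cyclic sequence $s_1\cdots s_L$ has windows $w_t=s_t\cdots s_{t+n-1}$ ($t=1,\dots,L$, indices mod $L$); it is an orientable sequence of order $n$ if the $2L$ strings $w_1,\dots,w_L,w_1^R,\dots,w_L^R$ are pairwise distinct. $M_k(n)$ is the maximum length of an orientable sequence of order $n$ over $\Sigma$. *)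

theory Defs
  imports Complex_Main
begin

definition strings :: "nat \<Rightarrow> nat \<Rightarrow> nat list set" where
  "strings k n = {xs. length xs = n \<and> (\<forall>x\<in>set xs. x < k)}"

definition lex_less :: "nat list \<Rightarrow> nat list \<Rightarrow> bool" where
  "lex_less a b \<longleftrightarrow>
     (\<exists>zs. zs \<noteq> [] \<and> b = a @ zs) \<or>
     (\<exists>i < min (length a) (length b). take i a = take i b \<and> a ! i < b ! i)"

definition lex_le :: "nat list \<Rightarrow> nat list \<Rightarrow> bool" where
  "lex_le a b \<longleftrightarrow> a = b \<or> lex_less a b"

definition rots :: "nat list \<Rightarrow> nat list set" where
  "rots a = {rotate i a | i. i < length a} \<union> {a}"

definition is_necklace :: "nat list \<Rightarrow> bool" where
  "is_necklace a \<longleftrightarrow> (\<forall>b\<in>rots a. lex_le a b)"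

definition is_bracelet :: "nat list \<Rightarrow> bool" where
  "is_bracelet a \<longleftrightarrow> (\<forall>b\<in>rots a \<union> rots (rev a). lex_le a b)"

definition symmetric_necklace :: "nat list \<Rightarrow> bool" where
  "symmetric_necklace a \<longleftrightarrow> is_necklace a \<and> rev a \<in> rots a"

definition asymmetric_necklace :: "nat list \<Rightarrow> bool" where
  "asymmetric_necklace a \<longleftrightarrow> is_necklace a \<and> rev a \<notin> rots a"

definition asym_bracelets :: "nat \<Rightarrow> nat \<Rightarrow> nat list set" where
  "asym_bracelets k n = {a \<in> strings k n. is_bracelet a \<and> asymmetric_necklace a}"

definition S_set :: "nat \<Rightarrow> nat \<Rightarrow> nat list set" where
  "S_set k n = (\<Union>a\<in>asym_bracelets k n. rots a)"

definition L_k :: "nat \<Rightarrow> nat \<Rightarrow> nat" where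
  "L_k k n = card (S_set k n)"

definition window :: "nat list \<Rightarrow> nat \<Rightarrow> nat \<Rightarrow> nat list" where
  "window s n t = map (\<lambda>i. s ! ((t + i) mod length s)) [0..<n]"

definition orientable :: "nat \<Rightarrow> nat \<Rightarrow> nat list \<Rightarrow> bool" where
  "orientable k n s \<longleftrightarrow> (\<forall>x\<in>set s. x < k) \<and>
     (let ws = map (window s n) [0..<length s] in distinct (ws @ map rev ws))"

definition M_k :: "nat \<Rightarrow> nat \<Rightarrow> nat" where
  "M_k k n = Max {length s | s. orientable k n s}"

end

(*
  Reversal pairs off the strings w that are not rev-symmetric (rev w is not a rotation of w), and
  the rotations of the asymmetric bracelets contain exactly one string of each pair; so
  k^n - #(rev-symmetric strings) <= 2 L_k(n) <= k^n. An orientable sequence has 2 M_k(n) distinct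
  windows and reversed windows, so 2 M_k(n) <= k^n.

  For the lower bound on M_k(n) take a longest cycle whose windows are pairwise distinct, closed
  under rotation, free of reversals, and contain the seed 0 0 1 2 0 1 2 ... Overwriting the first
  j letters of a string w with the seed and letting j decrease from n to 0 walks from the seed
  to w changing one letter at a time. As long as the walk avoids rev-symmetric and periodic
  strings it stays among the windows and their reversals: otherwise the necklace class of the
  next string, one of whose rotations agrees with a window in n - 1 consecutive letters, could be
  spliced into the cycle. So 2 M_k(n) >= k^n - #(degenerate strings), the degenerate ones being
  those whose walk does meet such a string.

  A rev-symmetric string is a product of two palindromes and a periodic one has a period of at
  most n/2. The seed has no palindromic factor of length >= 3 and no period, so such a string with a
  seeded prefix is determined by about n/2 + 3 of its letters. Hence there are at most
  (n + 1)(2n + 1) k^(n/2 + 3) = o(k^n) degenerate strings, and |M_k(n) - L_k(n)| is at most half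
  their number, negligible against L_k(n) >= (k^n - #(degenerate strings)) / 2.
*)

theory Submission
  imports Defs "HOL-Library.List_Lexorder"
begin

section \<open>Necklace classes and asymmetric bracelets\<close>

lemma rotate_mod_inverse: "rotate (length a - i mod length a) (rotate i a) = a"
proof (cases "a = []")
  case False
  have "i mod length a < length a" "i = length a * (i div length a) + i mod length a"
    using False by simp_all
  then have "length a - i mod length a + i = length a * (i div length a) + length a"
    by linarith
  then show ?thesis by (simp add: rotate_rotate)
qed simp

lemma rots_eq_range: "rots a = range (\<lambda>i. rotate i a)"
proof -
  have "rotate i a \<in> rots a" for i
  proof (cases "a = []")
    case False
    then have "rotate i a = rotate (i mod length a) a \<and> i mod length a < length a"
      by (metis rotate_conv_mod length_greater_0_conv mod_less_divisor)
    then show ?thesis unfolding rots_def by blast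
  qed (simp add: rots_def)
  then show ?thesis by (auto simp: rots_def intro: range_eqI[of _ _ 0])
qed

lemma self_in_rots: "a \<in> rots a"
  by (simp add: rots_def)

lemma rotate_in_rots: "rotate i a \<in> rots a"
  by (simp add: rots_eq_range)

lemma finite_rots: "finite (rots a)"
  by (simp add: rots_def)

lemma rots_eq_if_mem: assumes "b \<in> rots a" shows "rots b = rots a"
proof -
  obtain i where b: "b = rotate i a" using assms by (auto simp: rots_eq_range)
  have "rotate j b \<in> rots a" for j
    by (simp add: b rotate_rotate rotate_in_rots)
  moreover have "rotate j a \<in> rots b" for j
    by (metis b rotate_mod_inverse rotate_rotate rotate_in_rots)
  ultimately show ?thesis by (auto simp: rots_eq_range)
qed

lemma mem_rots_sym: "b \<in> rots a \<Longrightarrow> a \<in> rots b"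
  using rots_eq_if_mem self_in_rots by blast

lemma rots_rev: "rots (rev a) = rev ` rots a"
proof -
  have rev_sub: "rots (rev x) \<subseteq> rev ` rots x" for x
    by (auto simp: rots_eq_range rotate_rev rotate_in_rots)
  show ?thesis using rev_sub[of a] rev_sub[of "rev a"] by auto
qed

lemma rots_eq_if_common: "x \<in> rots a \<Longrightarrow> x \<in> rots b \<Longrightarrow> rots a = rots b"
  using rots_eq_if_mem by metis

lemma strings_eq_lists: "strings k n = {xs. set xs \<subseteq> {..<k} \<and> length xs = n}"
  unfolding strings_def by auto

lemma card_strings: "card (strings k n) = k ^ n"
  unfolding strings_eq_lists by (simp add: card_lists_length_eq)

lemma finite_strings: "finite (strings k n)"
  unfolding strings_eq_lists by (simp add: finite_lists_length_eq)

lemma rev_in_strings: "a \<in> strings k n \<Longrightarrow> rev a \<in> strings k n"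
  by (simp add: strings_def)

lemma rots_subset_strings: "a \<in> strings k n \<Longrightarrow> rots a \<subseteq> strings k n"
  by (auto simp: rots_eq_range strings_def)

lemma lex_le_iff_less_eq: "lex_le a b \<longleftrightarrow> a \<le> b"
proof -
  have "(\<exists>zs. zs \<noteq> [] \<and> b = a @ zs) \<longleftrightarrow> length a < length b \<and> take (length a) b = a"
    by (metis append_eq_conv_conj append_self_conv length_append less_add_same_cancel1
        length_greater_0_conv)
  then show ?thesis
    unfolding lex_le_def lex_less_def list_le_def list_less_def lexord_take_index_conv
    by auto
qed

definition dihedral_class :: "nat list \<Rightarrow> nat list set" where
  "dihedral_class a = rots a \<union> rots (rev a)"

lemma self_in_dihedral_class: "a \<in> dihedral_class a"
  by (simp add: dihedral_class_def self_in_rots)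

lemma dihedral_class_rev: "dihedral_class (rev a) = dihedral_class a"
  by (auto simp: dihedral_class_def)

lemma dihedral_class_eq_if_mem:
  assumes "b \<in> dihedral_class a" shows "dihedral_class b = dihedral_class a"
proof -
  obtain c where "c = a \<or> c = rev a" and "rots b = rots c"
    using assms rots_eq_if_mem unfolding dihedral_class_def by blast
  then show ?thesis by (auto simp: dihedral_class_def rots_rev image_image)
qed

lemma is_bracelet_iff_Min: "is_bracelet a \<longleftrightarrow> a = Min (dihedral_class a)"
  using self_in_dihedral_class[of a]
  unfolding is_bracelet_def dihedral_class_def[symmetric] lex_le_iff_less_eq
  by (metis Min_eqI Min_le finite_rots finite_Un dihedral_class_def)

lemma dihedral_class_eq_rots_iff: "dihedral_class a = rots a \<longleftrightarrow> rev a \<in> rots a"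
  using self_in_rots[of "rev a"] rots_eq_if_mem[of "rev a" a] by (auto simp: dihedral_class_def)

lemma rev_in_dihedral_class: "rev a \<in> dihedral_class a"
  using self_in_dihedral_class dihedral_class_rev by metis

definition rev_symmetric :: "nat list \<Rightarrow> bool" where
  "rev_symmetric w \<longleftrightarrow> rev w \<in> rots w"

lemma S_set_subset_strings: "S_set k n \<subseteq> strings k n"
  by (auto simp: S_set_def asym_bracelets_def dest: rots_subset_strings)

lemma finite_S_set: "finite (S_set k n)"
  using S_set_subset_strings finite_strings by (rule finite_subset)

lemma rev_notin_S_set: assumes "w \<in> S_set k n" shows "rev w \<notin> S_set k n"
proof
  assume "rev w \<in> S_set k n"
  then obtain b where b: "b \<in> asym_bracelets k n" "rev w \<in> rots b" by (auto simp: S_set_def)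
  obtain a where a: "a \<in> asym_bracelets k n" "w \<in> rots a" using assms by (auto simp: S_set_def)
  have "w \<in> dihedral_class a" "rev w \<in> dihedral_class b"
    using a(2) b(2) by (simp_all add: dihedral_class_def)
  then have "dihedral_class a = dihedral_class b"
    using dihedral_class_eq_if_mem dihedral_class_rev by metis
  then have "a = b" using a(1) b(1) by (simp add: asym_bracelets_def is_bracelet_iff_Min)
  then have "rev w \<in> rots (rev a)" "rev w \<in> rots a" using a(2) b(2) by (auto simp: rots_rev)
  then have "rev a \<in> rots a" using rots_eq_if_common self_in_rots by metis
  then show False using a(1) by (simp add: asym_bracelets_def asymmetric_necklace_def)
qed

lemma L_k_double_le: "2 * L_k k n \<le> k ^ n"
proof -
  have "S_set k n \<inter> rev ` S_set k n = {}" using rev_notin_S_set by auto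
  then have "card (S_set k n \<union> rev ` S_set k n) = 2 * L_k k n"
    by (simp add: card_Un_disjoint finite_S_set card_image L_k_def)
  moreover have "S_set k n \<union> rev ` S_set k n \<subseteq> strings k n"
    using S_set_subset_strings by (auto intro: rev_in_strings)
  ultimately show ?thesis by (metis card_mono card_strings finite_strings)
qed

lemma mem_S_set_if_not_rev_symmetric:
  assumes "w \<in> strings k n" "\<not> rev_symmetric w"
  shows "w \<in> S_set k n \<union> rev ` S_set k n"
proof -
  define b where "b = Min (dihedral_class w)"
  have "b \<in> dihedral_class w"
    unfolding b_def dihedral_class_def using self_in_rots by (intro Min_in) (auto simp: finite_rots)
  then have class_b: "dihedral_class b = dihedral_class w" by (rule dihedral_class_eq_if_mem)
  then have bracelet: "is_bracelet b" by (simp add: is_bracelet_iff_Min b_def)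
  have "rev b \<notin> rots b"
  proof
    assume "rev b \<in> rots b"
    then have "dihedral_class w = rots b" using class_b dihedral_class_eq_rots_iff by metis
    then have "w \<in> rots b" "rev w \<in> rots b"
      using self_in_dihedral_class rev_in_dihedral_class by metis+
    then show False
      using assms(2) rots_eq_if_common self_in_rots unfolding rev_symmetric_def by metis
  qed
  moreover have "b \<in> strings k n"
    using \<open>b \<in> dihedral_class w\<close> assms(1) rots_subset_strings rev_in_strings
    unfolding dihedral_class_def by blast
  ultimately have "b \<in> asym_bracelets k n"
    using bracelet unfolding asym_bracelets_def asymmetric_necklace_def is_necklace_def
      is_bracelet_def by blast
  moreover have "w \<in> rots b \<or> rev w \<in> rots b"
    using class_b self_in_dihedral_class[of w] by (auto simp: dihedral_class_def rots_rev)
  ultimately show ?thesis unfolding S_set_def by force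
qed

lemma power_le_L_k_plus_rev_symmetric:
  "k ^ n \<le> 2 * L_k k n + card {w \<in> strings k n. rev_symmetric w}"
proof -
  have "strings k n \<subseteq> S_set k n \<union> rev ` S_set k n \<union> {w \<in> strings k n. rev_symmetric w}"
    using mem_S_set_if_not_rev_symmetric by blast
  then have "k ^ n \<le> card (S_set k n \<union> rev ` S_set k n \<union> {w \<in> strings k n. rev_symmetric w})"
    unfolding card_strings[symmetric] by (rule card_mono[rotated]) (simp add: finite_S_set finite_strings)
  also have "\<dots> \<le> card (S_set k n) + card (rev ` S_set k n) + card {w \<in> strings k n. rev_symmetric w}"
    by (rule order_trans[OF card_Un_le add_right_mono[OF card_Un_le]])
  also have "\<dots> \<le> 2 * L_k k n + card {w \<in> strings k n. rev_symmetric w}"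
    by (simp add: L_k_def card_image_le finite_S_set)
  finally show ?thesis .
qed

section \<open>Palindromes and periods\<close>

definition periodic :: "nat list \<Rightarrow> bool" where
  "periodic w \<longleftrightarrow> (\<exists>d. 0 < d \<and> d < length w \<and> rotate d w = w)"

definition palindrome :: "nat list \<Rightarrow> bool" where
  "palindrome x \<longleftrightarrow> rev x = x"

lemma rev_symmetric_imp_palindrome_split:
  assumes "rev_symmetric z" shows "\<exists>i\<le>length z. palindrome (take i z) \<and> palindrome (drop i z)"
proof (cases "z = []")
  case False
  obtain m where m: "rev z = rotate m z" using assms by (auto simp: rev_symmetric_def rots_eq_range)
  define i where "i = m mod length z"
  have "drop i z @ take i z = rev (drop i z) @ rev (take i z)"
    using m by (simp add: rotate_drop_take i_def flip: rev_append)
  then have "palindrome (take i z) \<and> palindrome (drop i z)"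
    by (simp add: append_eq_append_conv palindrome_def)
  moreover have "i \<le> length z" using False by (simp add: i_def less_imp_le)
  ultimately show ?thesis by blast
qed (simp add: palindrome_def)

lemma periodic_imp_short_period:
  assumes "periodic z" shows "\<exists>d. 0 < d \<and> d \<le> length z div 2 \<and> rotate d z = z"
proof -
  obtain d where d: "0 < d" "d < length z" "rotate d z = z" using assms by (auto simp: periodic_def)
  have "rotate (length z - d) z = rotate (length z - d) (rotate d z)" by (simp only: d(3))
  also have "\<dots> = z" using d(2) by (simp add: rotate_rotate)
  finally have "rotate (length z - d) z = z" .
  then show ?thesis
  proof (cases "d \<le> length z div 2")
    case False
    then show ?thesis using d \<open>rotate (length z - d) z = z\<close> by (intro exI[of _ "length z - d"]) auto
  qed (use d in blast)
qed

lemma nth_add_period: "rotate d z = z \<Longrightarrow> t + d < length z \<Longrightarrow> z ! (t + d) = z ! t"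
  by (metis add.commute add_lessD1 mod_less nth_rotate)

lemma nth_mod_period:
  assumes "rotate d z = z" "0 < d" shows "t < length z \<Longrightarrow> z ! t = z ! (t mod d)"
proof (induction t rule: less_induct)
  case (less t)
  show ?case
  proof (cases "t < d")
    case False
    then have "z ! t = z ! (t - d)" using nth_add_period[OF assms(1), of "t - d"] less.prems by simp
    also have "\<dots> = z ! ((t - d) mod d)" using less False assms(2) by simp
    finally show ?thesis using False by (simp add: le_mod_geq)
  qed simp
qed

lemma periodic_eqI:
  assumes "rotate d z = z" "rotate d z' = z'" "0 < d" "length z' = length z" "take d z = take d z'"
  shows "z = z'"
proof (rule nth_equalityI)
  fix t assume "t < length z"
  moreover have "t mod d < d" using assms(3) by simp
  ultimately show "z ! t = z' ! t"
    using nth_mod_period[OF assms(1,3)] nth_mod_period[OF assms(2,3)] assms(4,5)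
    by (metis nth_take)
qed (use assms(4) in simp)

lemma palindrome_nth: "palindrome x \<Longrightarrow> t < length x \<Longrightarrow> x ! t = x ! (length x - 1 - t)"
  unfolding palindrome_def by (metis diff_Suc_eq_diff_pred diff_commute rev_nth)

lemma palindrome_eqI:
  assumes "length x = length y" "palindrome x" "palindrome y"
    "take ((length x + 1) div 2) x = take ((length x + 1) div 2) y"
  shows "x = y"
proof (rule nth_equalityI)
  fix t assume t: "t < length x"
  let ?c = "(length x + 1) div 2"
  have "t < ?c \<or> length x - 1 - t < ?c" using t by linarith
  then show "x ! t = y ! t"
    using assms t palindrome_nth[OF assms(2) t] palindrome_nth[of y t] by (metis nth_take)
qed (use assms(1) in simp)

lemma palindrome_take_nth:
  "palindrome (take i z) \<Longrightarrow> i \<le> length z \<Longrightarrow> t < i \<Longrightarrow> z ! t = z ! (i - 1 - t)"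
  using palindrome_nth[of "take i z" t] by simp

lemma palindrome_drop_nth:
  "palindrome (drop i z) \<Longrightarrow> t < length z - i \<Longrightarrow> z ! (i + t) = z ! (length z - 1 - t)"
  using palindrome_nth[of "drop i z" t] by (simp add: algebra_simps)

section \<open>The seed and degenerate strings\<close>

(* 0, 0, 1, 2, 0, 1, 2, ...: no palindromic factor has length 3 or more, and the doubled 0 breaks
   every period, which plain t mod 3 would not. *)
definition seed :: "nat \<Rightarrow> nat" where
  "seed t = (if t = 0 then 0 else (t - 1) mod 3)"

lemma add_mod_eq_self_iff: "(x + y) mod m = (x::nat) mod m \<longleftrightarrow> m dvd y"
  using mod_eq_dvd_iff_nat[of x "x + y" m] by (auto simp: eq_commute)

lemma seed_eq_iff: assumes "0 < s" "s \<le> t" shows "seed t = seed s \<longleftrightarrow> 3 dvd (t - s)"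
proof -
  have "seed t = ((s - 1) + (t - s)) mod 3" "seed s = (s - 1) mod 3"
    using assms by (simp_all add: seed_def)
  then show ?thesis by (simp only: add_mod_eq_self_iff)
qed

lemma seed_no_palindromic_factor:
  assumes "3 \<le> m" shows "seed a \<noteq> seed (a + m - 1) \<or> seed (a + 1) \<noteq> seed (a + m - 2)"
proof -
  obtain y where m: "m = y + 3" using assms by (metis add.commute le_Suc_ex)
  have dvd: "\<not> (3 dvd y \<and> 3 dvd (y + 1))" "\<not> (3 dvd y \<and> 3 dvd (y + 2))" by presburger+
  show ?thesis
  proof (cases "a = 0")
    case True
    have "seed 0 = seed 1" by (simp add: seed_def)
    moreover have "seed (m - 1) = seed 1 \<longleftrightarrow> 3 dvd (y + 1)" "seed (m - 2) = seed 1 \<longleftrightarrow> 3 dvd y"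
      using m seed_eq_iff[of 1 "m - 1"] seed_eq_iff[of 1 "m - 2"] by simp_all
    ultimately show ?thesis using True dvd by auto
  next
    case False
    then have "seed (a + m - 1) = seed a \<longleftrightarrow> 3 dvd (y + 2)"
      "seed (a + m - 2) = seed (a + 1) \<longleftrightarrow> 3 dvd y"
      using m seed_eq_iff[of a "a + m - 1"] seed_eq_iff[of "a + 1" "a + m - 2"] by simp_all
    then show ?thesis using dvd by auto
  qed
qed

lemma seed_not_periodic: assumes "0 < d" shows "seed d \<noteq> seed 0 \<or> seed (d + 1) \<noteq> seed 1"
proof -
  have "seed 0 = seed 1" by (simp add: seed_def)
  moreover have "seed d = seed 1 \<longleftrightarrow> 3 dvd (d - 1)" "seed (d + 1) = seed 1 \<longleftrightarrow> 3 dvd d"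
    using assms seed_eq_iff[of 1 d] seed_eq_iff[of 1 "d + 1"] by simp_all
  moreover have "\<not> (3 dvd (d - 1) \<and> 3 dvd d)" using assms by presburger
  ultimately show ?thesis by auto
qed

definition seeded :: "nat \<Rightarrow> nat list \<Rightarrow> nat list" where
  "seeded j w = map seed [0..<j] @ drop j w"

lemma length_seeded: "j \<le> length w \<Longrightarrow> length (seeded j w) = length w"
  by (simp add: seeded_def)

lemma nth_seeded:
  "j \<le> length w \<Longrightarrow> t < length w \<Longrightarrow> seeded j w ! t = (if t < j then seed t else w ! t)"
  by (simp add: seeded_def nth_append)

lemma seeded_0: "seeded 0 w = w"
  by (simp add: seeded_def)

lemma seeded_length: "seeded (length w) w = map seed [0..<length w]"
  by (simp add: seeded_def)

lemma seeded_in_strings: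
  assumes "3 \<le> k" "w \<in> strings k n" "j \<le> n" shows "seeded j w \<in> strings k n"
proof -
  have "seed t < 3" for t by (simp add: seed_def)
  then have "seed t < k" for t using assms(1) less_le_trans by blast
  then show ?thesis using assms(2,3) by (auto simp: strings_def seeded_def dest: in_set_dropD)
qed

lemma seeded_eqD:
  assumes "seeded j w = seeded j w'" "take j w = take j w'" "j \<le> length w"
  shows "w = w'"
proof -
  have "drop j w = drop j w'" using assms(1,3) by (simp add: seeded_def)
  then show ?thesis using assms(2) by (metis append_take_drop_id)
qed

lemma seeded_palindromic_segment_short:
  assumes "\<forall>t<j. z ! t = seed t" "a + m \<le> j" "\<forall>t<m. z ! (a + t) = z ! (a + m - 1 - t)"
  shows "m \<le> 2"
proof (rule ccontr)
  assume "\<not> m \<le> 2"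
  then have "3 \<le> m" by simp
  moreover have "a + m - 1 - 1 = a + m - 2" by simp
  then have "z ! a = z ! (a + m - 1)" "z ! (a + 1) = z ! (a + m - 2)"
    using assms(3)[rule_format, of 0] assms(3)[rule_format, of 1] \<open>3 \<le> m\<close> by simp_all
  ultimately show False
    using assms(1,2) seed_no_palindromic_factor[of m a] by simp
qed

lemma card_le_power_if_determined:
  assumes "B \<subseteq> strings k n" "finite P" "P \<subseteq> {..<n}"
    and "\<And>w w'. w \<in> B \<Longrightarrow> w' \<in> B \<Longrightarrow> \<forall>t\<in>P. w ! t = w' ! t \<Longrightarrow> w = w'"
  shows "card B \<le> k ^ card P"
proof -
  define f where "f w = map (nth w) (sorted_list_of_set P)" for w :: "nat list"
  have "inj_on f B" by (rule inj_onI) (use assms(2,4) in \<open>auto simp: f_def map_eq_conv\<close>)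
  moreover have "f ` B \<subseteq> strings k (card P)"
    using assms(1,2,3) by (fastforce simp: f_def strings_def dest: nth_mem)
  ultimately show ?thesis by (metis card_inj_on_le card_strings finite_strings)
qed

lemma seeded_period_bound:
  assumes "rotate d (seeded j w) = seeded j w" "0 < d" "j \<le> length w"
  shows "j \<le> d + 1"
proof (rule ccontr)
  assume "\<not> j \<le> d + 1"
  then have "seeded j w ! (0 + d) = seeded j w ! 0" "seeded j w ! (1 + d) = seeded j w ! 1"
    using nth_add_period[OF assms(1), of 0] nth_add_period[OF assms(1), of 1] assms(3)
    by (simp_all add: length_seeded)
  moreover have "seeded j w ! t = seed t" if "t \<le> d + 1" for t
    using that \<open>\<not> j \<le> d + 1\<close> assms(3) by (simp add: nth_seeded)
  ultimately have "seed d = seed 0" "seed (d + 1) = seed 1" by (simp_all add: add.commute)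
  then show False using seed_not_periodic[OF assms(2)] by simp
qed

lemma card_seeded_periodic_le:
  assumes "j \<le> n" "0 < d" "d \<le> n div 2" "1 \<le> k"
  shows "card {w \<in> strings k n. rotate d (seeded j w) = seeded j w} \<le> k ^ (n div 2 + 3)"
    (is "card ?B \<le> _")
proof (cases "?B = {}")
  case False
  then obtain w0 where "w0 \<in> ?B" by blast
  then have "j \<le> d + 1" using assms(1,2) by (intro seeded_period_bound[of d j w0]) (simp_all add: strings_def)
  have "card ?B \<le> k ^ card {..<max j d}"
  proof (rule card_le_power_if_determined)
    show "{..<max j d} \<subseteq> {..<n}" using assms(1,3) by auto
  next
    fix w w' assume w: "w \<in> ?B" and w': "w' \<in> ?B" and agree: "\<forall>t\<in>{..<max j d}. w ! t = w' ! t"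
    have len: "length w = n" "length w' = n" using w w' by (simp_all add: strings_def)
    have "seeded j w ! t = seeded j w' ! t" if "t < d" for t
    proof -
      have "t < n" using that assms(3) by linarith
      then show ?thesis using that agree assms(1) len by (simp add: nth_seeded)
    qed
    then have "take d (seeded j w) = take d (seeded j w')"
      using assms(1,3) len by (intro nth_take_lemma) (simp_all add: length_seeded)
    then have "seeded j w = seeded j w'"
      using w w' assms(1,2) len periodic_eqI[of d "seeded j w" "seeded j w'"]
      by (simp add: length_seeded)
    moreover have "take j w = take j w'"
      using agree assms(1) len by (intro nth_take_lemma) simp_all
    ultimately show "w = w'" using assms(1) len seeded_eqD[of j w w'] by simp
  qed auto
  also have "\<dots> \<le> k ^ (n div 2 + 3)"
    using assms(3,4) \<open>j \<le> d + 1\<close> by (intro power_increasing) auto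
  finally show ?thesis .
qed (metis card.empty zero_le)

(* The left-hand side counts the positions determining a string with seeded prefix of length j
   that splits into palindromes of lengths i and n - i: those below max j ceil(i/2) and those in
   [max i j, i + ceil((n-i)/2)). The hypotheses say that the parts of the two palindromes
   reflected into the seeded prefix are short. *)
lemma palindrome_split_free_positions_le:
  fixes i j n :: nat
  assumes left: "i \<le> 2 * j \<Longrightarrow> i - 2 * (i - j) \<le> 2"
    and right: "2 * (n - j) \<le> n - i \<Longrightarrow> n - i - 2 * (n - j) \<le> 2"
    and "j \<le> n" "i \<le> n"
  shows "max j ((i + 1) div 2) + (i + (n - i + 1) div 2 - max i j) \<le> n div 2 + 3"
proof -
  define c b h where "c = (i + 1) div 2" and "b = (n - i + 1) div 2" and "h = n div 2"
  have cbh: "i \<le> 2 * c" "2 * c \<le> i + 1" "2 * b \<le> n - i + 1" "n \<le> 2 * h + 1"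
    unfolding c_def b_def h_def by linarith+
  consider "j \<le> c" | "c < j" "j \<le> i" | "i < j" by linarith
  then have "max j c + (i + b - max i j) \<le> h + 3"
  proof cases
    case 1
    then show ?thesis using cbh \<open>i \<le> n\<close> by (simp add: max_def) linarith
  next
    case 2
    then have "2 * j - i \<le> 2" using left cbh by linarith
    then show ?thesis using 2 cbh \<open>i \<le> n\<close> by (simp add: max_def)
  next
    case 3
    then have "i \<le> 2" using left by linarith
    then show ?thesis using 3 right cbh assms(3) by (simp add: max_def) linarith
  qed
  then show ?thesis by (simp add: c_def b_def h_def)
qed

lemma seeded_palindrome_split_bound:
  assumes "palindrome (take i (seeded j w))" "palindrome (drop i (seeded j w))"
    and "j \<le> length w" "i \<le> length w"
  shows "max j ((i + 1) div 2) + (i + (length w - i + 1) div 2 - max i j) \<le> length w div 2 + 3"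
proof -
  define n z where "n = length w" and "z = seeded j w"
  have len: "length z = n" using assms(3) by (simp add: n_def z_def length_seeded)
  have seed_prefix: "\<forall>t<j. z ! t = seed t" using assms(3) by (simp add: z_def nth_seeded)
  have left: "i - 2 * (i - j) \<le> 2" if "i \<le> 2 * j"
  proof (rule seeded_palindromic_segment_short[OF seed_prefix])
    show "i - j + (i - 2 * (i - j)) \<le> j" using that by linarith
    show "\<forall>t<i - 2 * (i - j). z ! (i - j + t) = z ! (i - j + (i - 2 * (i - j)) - 1 - t)"
    proof (intro allI impI)
      fix t assume t: "t < i - 2 * (i - j)"
      then have "i - j + t < i" by linarith
      then have "z ! (i - j + t) = z ! (i - 1 - (i - j + t))"
        using palindrome_take_nth[OF assms(1)[folded z_def] _ \<open>i - j + t < i\<close>] assms(4) len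
        by (simp add: n_def)
      moreover have "i - 1 - (i - j + t) = i - j + (i - 2 * (i - j)) - 1 - t"
        using t \<open>i \<le> 2 * j\<close> by linarith
      ultimately show "z ! (i - j + t) = z ! (i - j + (i - 2 * (i - j)) - 1 - t)" by simp
    qed
  qed
  have right: "n - i - 2 * (n - j) \<le> 2" if "2 * (n - j) \<le> n - i"
  proof (rule seeded_palindromic_segment_short[OF seed_prefix])
    show "i + (n - j) + (n - i - 2 * (n - j)) \<le> j" using that assms(3,4) n_def by linarith
    show "\<forall>t<n - i - 2 * (n - j). z ! (i + (n - j) + t) = z ! (i + (n - j) + (n - i - 2 * (n - j)) - 1 - t)"
    proof (intro allI impI)
      fix t assume t: "t < n - i - 2 * (n - j)"
      then have "z ! (i + (n - j + t)) = z ! (n - 1 - (n - j + t))"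
        using palindrome_drop_nth[OF assms(2)[folded z_def], of "n - j + t"] len by simp
      moreover have "n - 1 - (n - j + t) = i + (n - j) + (n - i - 2 * (n - j)) - 1 - t"
        using t assms(3) n_def by linarith
      ultimately show "z ! (i + (n - j) + t) = z ! (i + (n - j) + (n - i - 2 * (n - j)) - 1 - t)"
        by (simp add: add.assoc)
    qed
  qed
  show ?thesis
    using palindrome_split_free_positions_le[OF left right] assms(3,4) by (simp add: n_def)
qed

lemma seeded_palindrome_split_determined:
  assumes len: "length w = n" "length w' = n" and "j \<le> n" "i \<le> n"
    and pal: "palindrome (take i (seeded j w))" "palindrome (drop i (seeded j w))"
      "palindrome (take i (seeded j w'))" "palindrome (drop i (seeded j w'))"
    and agree: "\<forall>t \<in> {..<max j ((i + 1) div 2)} \<union> {max i j..<i + (n - i + 1) div 2}. w ! t = w' ! t"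
  shows "w = w'"
proof -
  define c b z z' where "c = (i + 1) div 2" and "b = (n - i + 1) div 2"
    and "z = seeded j w" and "z' = seeded j w'"
  have lenz: "length z = n" "length z' = n" using len assms(3) by (simp_all add: z_def z'_def length_seeded)
  have same: "z ! t = z' ! t" if "t < n" "t < max j c \<or> max i j \<le> t \<and> t < i + b" for t
    using that agree assms(3) len by (auto simp: z_def z'_def c_def b_def nth_seeded)
  have "take i z = take i z'"
  proof (rule palindrome_eqI)
    have "c \<le> i" by (simp add: c_def)
    then have "take c z = take c z'" using same assms(4) lenz by (intro nth_take_lemma) auto
    then show "take ((length (take i z) + 1) div 2) (take i z) = take ((length (take i z) + 1) div 2) (take i z')"
      using \<open>c \<le> i\<close> assms(4) lenz by (simp add: c_def min_def)
  qed (use pal lenz in \<open>simp_all add: z_def z'_def\<close>)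
  moreover have "drop i z = drop i z'"
  proof (rule palindrome_eqI)
    have "drop i z ! t = drop i z' ! t" if "t < b" for t
    proof -
      have "i + t < n" using that assms(4) unfolding b_def by linarith
      moreover have "i + t < max j c \<or> max i j \<le> i + t \<and> i + t < i + b"
        using that by (cases "i + t < j") auto
      ultimately show ?thesis using same lenz assms(4) by simp
    qed
    then have "take b (drop i z) = take b (drop i z')"
      using lenz assms(4) unfolding b_def by (intro nth_take_lemma) auto
    then show "take ((length (drop i z) + 1) div 2) (drop i z) = take ((length (drop i z) + 1) div 2) (drop i z')"
      using lenz by (simp add: b_def)
  qed (use pal lenz in \<open>simp_all add: z_def z'_def\<close>)
  ultimately have "z = z'" by (metis append_take_drop_id)
  moreover have "take j w = take j w'" using agree assms(3) len by (intro nth_take_lemma) auto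
  ultimately show "w = w'" using assms(3) len seeded_eqD[of j w w'] by (simp add: z_def z'_def)
qed

lemma card_seeded_palindrome_split_le:
  assumes "j \<le> n" "i \<le> n" "1 \<le> k"
  shows "card {w \<in> strings k n. palindrome (take i (seeded j w)) \<and> palindrome (drop i (seeded j w))}
    \<le> k ^ (n div 2 + 3)" (is "card ?B \<le> _")
proof (cases "?B = {}")
  case False
  define c b where "c = (i + 1) div 2" and "b = (n - i + 1) div 2"
  define P where "P = {..<max j c} \<union> {max i j..<i + b}"
  obtain w0 where "w0 \<in> ?B" using False by blast
  then have bound: "max j c + (i + b - max i j) \<le> n div 2 + 3"
    using seeded_palindrome_split_bound[of i j w0] assms(1,2) by (simp add: strings_def c_def b_def)
  have "card ?B \<le> k ^ card P"
  proof (rule card_le_power_if_determined)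
    have "c \<le> n" "i + b \<le> n" using assms(2) unfolding c_def b_def by linarith+
    then show "P \<subseteq> {..<n}" using assms(1) by (auto simp: P_def)
    show "w = w'" if "w \<in> ?B" "w' \<in> ?B" "\<forall>t\<in>P. w ! t = w' ! t" for w w'
      using that assms(1,2) seeded_palindrome_split_determined[of w n w' j i]
      by (simp add: strings_def P_def c_def b_def)
  qed (auto simp: P_def)
  also have "\<dots> \<le> k ^ (n div 2 + 3)"
  proof (rule power_increasing)
    have "card P \<le> card {..<max j c} + card {max i j..<i + b}" unfolding P_def by (rule card_Un_le)
    then show "card P \<le> n div 2 + 3" using bound by simp
  qed (use assms(3) in simp)
  finally show ?thesis .
qed (metis card.empty zero_le)

(* seeded n w, seeded (n - 1) w, ..., seeded 0 w = w walks from the seed to w, one letter per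
   step; w is degenerate if the walk meets a rev-symmetric or periodic string. *)
definition degenerate :: "nat \<Rightarrow> nat \<Rightarrow> nat list set" where
  "degenerate k n = {w \<in> strings k n. \<exists>j\<le>n. rev_symmetric (seeded j w) \<or> periodic (seeded j w)}"

lemma card_degenerate_le:
  assumes "1 \<le> k"
  shows "card (degenerate k n) \<le> (n + 1) * (2 * n + 1) * k ^ (n div 2 + 3)"
proof -
  define K where "K = k ^ (n div 2 + 3)"
  define Pal where "Pal j i =
    {w \<in> strings k n. palindrome (take i (seeded j w)) \<and> palindrome (drop i (seeded j w))}" for j i
  define Per where "Per j d = {w \<in> strings k n. rotate d (seeded j w) = seeded j w}" for j d
  define U where "U j = (\<Union>i\<le>n. Pal j i) \<union> (\<Union>d\<in>{1..n div 2}. Per j d)" for j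
  have "degenerate k n \<subseteq> (\<Union>j\<le>n. U j)"
  proof
    fix w assume "w \<in> degenerate k n"
    then obtain j where j: "j \<le> n" "rev_symmetric (seeded j w) \<or> periodic (seeded j w)"
      and w: "w \<in> strings k n" by (auto simp: degenerate_def)
    then have len: "length (seeded j w) = n" by (simp add: strings_def length_seeded)
    from j(2) have "w \<in> U j"
    proof
      assume "rev_symmetric (seeded j w)"
      then show ?thesis
        using rev_symmetric_imp_palindrome_split len w by (force simp: U_def Pal_def)
    next
      assume "periodic (seeded j w)"
      then show ?thesis
        using periodic_imp_short_period len w by (force simp: U_def Per_def)
    qed
    then show "w \<in> (\<Union>j\<le>n. U j)" using j(1) by blast
  qed
  then have "card (degenerate k n) \<le> card (\<Union>j\<le>n. U j)"
    by (rule card_mono[rotated]) (simp add: U_def Pal_def Per_def finite_strings)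
  also have "\<dots> \<le> (\<Sum>j\<le>n. card (U j))" by (rule card_UN_le) simp
  also have "\<dots> \<le> (\<Sum>j\<le>n. (2 * n + 1) * K)"
  proof (rule sum_mono)
    fix j assume "j \<in> {..n}"
    have "card (U j) \<le> (\<Sum>i\<le>n. card (Pal j i)) + (\<Sum>d\<in>{1..n div 2}. card (Per j d))"
      unfolding U_def by (rule order_trans[OF card_Un_le add_mono[OF card_UN_le card_UN_le]]) simp_all
    also have "\<dots> \<le> (\<Sum>i\<le>n. K) + (\<Sum>d\<in>{1..n div 2}. K)"
      using \<open>j \<in> {..n}\<close> card_seeded_palindrome_split_le card_seeded_periodic_le assms
      by (intro add_mono sum_mono) (auto simp: Pal_def Per_def K_def)
    also have "\<dots> \<le> (2 * n + 1) * K" by (simp add: algebra_simps)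
    finally show "card (U j) \<le> (2 * n + 1) * K" .
  qed
  also have "\<dots> = (n + 1) * (2 * n + 1) * K" by (simp add: algebra_simps)
  finally show ?thesis by (simp add: K_def)
qed

lemma power_le_L_k_plus_degenerate: "k ^ n \<le> 2 * L_k k n + card (degenerate k n)"
proof -
  have "{w \<in> strings k n. rev_symmetric w} \<subseteq> degenerate k n"
    unfolding degenerate_def using seeded_0 by force
  then have "card {w \<in> strings k n. rev_symmetric w} \<le> card (degenerate k n)"
    by (intro card_mono) (simp_all add: degenerate_def finite_strings)
  then show ?thesis using power_le_L_k_plus_rev_symmetric[of k n] by linarith
qed

section \<open>Windows of cyclic sequences\<close>

definition windows :: "nat \<Rightarrow> nat list \<Rightarrow> nat list set" where
  "windows n s = window s n ` {..<length s}"

lemma set_map_window: "set (map (window s n) [0..<length s]) = windows n s"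
  by (auto simp: windows_def)

lemma finite_windows: "finite (windows n s)"
  by (simp add: windows_def)

lemma length_window [simp]: "length (window s n t) = n"
  by (simp add: window_def)

lemma nth_window: "i < n \<Longrightarrow> window s n t ! i = s ! ((t + i) mod length s)"
  by (simp add: window_def)

lemma window_0_eq_take: "n \<le> length s \<Longrightarrow> window s n 0 = take n s"
  by (rule nth_equalityI) (simp_all add: nth_window)

lemma window_mod: "window s n (t mod length s) = window s n t"
  by (rule nth_equalityI) (simp_all add: nth_window mod_add_left_eq)

lemma window_rotate: "0 < length s \<Longrightarrow> window (rotate r s) n u = window s n (u + r)"
  by (rule nth_equalityI) (simp_all add: nth_window nth_rotate mod_add_right_eq add_ac)

lemma windows_rotate_subset: assumes "0 < length s" shows "windows n (rotate r s) \<subseteq> windows n s"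
proof
  fix w assume "w \<in> windows n (rotate r s)"
  then obtain u where "w = window s n ((u + r) mod length s)"
    using assms by (auto simp: windows_def window_rotate window_mod)
  then show "w \<in> windows n s" using assms by (simp add: windows_def)
qed

lemma windows_rotate: assumes "0 < length s" shows "windows n (rotate r s) = windows n s"
proof
  show "windows n (rotate r s) \<subseteq> windows n s" using assms by (rule windows_rotate_subset)
  have "windows n s = windows n (rotate (length s - r mod length s) (rotate r s))"
    by (simp only: rotate_mod_inverse)
  also have "\<dots> \<subseteq> windows n (rotate r s)" using assms by (intro windows_rotate_subset) simp
  finally show "windows n s \<subseteq> windows n (rotate r s)" .
qed

lemma windows_subset_strings: assumes "\<forall>x\<in>set s. x < k" shows "windows n s \<subseteq> strings k n"
proof -
  have "s ! ((t + i) mod length s) < k" if "t < length s" for t i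
    using that assms by (metis nth_mem mod_less_divisor gr_implies_not0 neq0_conv)
  then show ?thesis by (auto simp: windows_def strings_def window_def)
qed

lemma windows_eq_rots: assumes "length p = n" "0 < n" shows "windows n p = rots p"
proof -
  have "window p n t = rotate t p" if "t < n" for t
    by (rule nth_equalityI) (use assms in \<open>simp_all add: nth_window nth_rotate add.commute\<close>)
  moreover have "rots p = (\<lambda>t. rotate t p) ` {..<n}"
    using assms by (auto simp: rots_def intro: image_eqI[of _ _ 0])
  ultimately show ?thesis using assms by (simp add: windows_def)
qed

lemma window_append_left:
  assumes "n \<le> length s" "length p = n" "take (n - 1) s = take (n - 1) p" "t < length s"
  shows "window (s @ p) n t = window s n t"
proof (rule nth_equalityI)
  fix i assume "i < length (window (s @ p) n t)"
  then have i: "i < n" by simp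
  have "(s @ p) ! (t + i) = s ! ((t + i) mod length s)"
  proof (cases "t + i < length s")
    case False
    then have "t + i - length s < n - 1" "(t + i) mod length s = t + i - length s"
      using assms(1,4) i by (simp_all add: le_mod_geq)
    then show ?thesis using False assms(3) by (simp add: nth_append) (metis nth_take)
  qed (simp add: nth_append)
  then show "window (s @ p) n t ! i = window s n t ! i"
    using i assms(2,4) by (simp add: nth_window)
qed simp

lemma window_append_right:
  assumes "n \<le> length s" "length p = n" "take (n - 1) s = take (n - 1) p" "u < n"
  shows "window (s @ p) n (length s + u) = window p n u"
proof (rule nth_equalityI)
  fix i assume "i < length (window (s @ p) n (length s + u))"
  then have i: "i < n" by simp
  have "(s @ p) ! ((length s + u + i) mod (length s + n)) = p ! ((u + i) mod n)"
  proof (cases "u + i < n")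
    case False
    then have "(length s + u + i) mod (length s + n) = u + i - n" "(u + i) mod n = u + i - n"
      "u + i - n < n - 1" using assms(4) i by (simp_all add: le_mod_geq)
    then show ?thesis using False assms(1,3) by (simp add: nth_append) (metis nth_take)
  qed (simp add: nth_append)
  then show "window (s @ p) n (length s + u) ! i = window p n u ! i"
    using i assms(2) by (simp add: nth_window)
qed simp

lemma windows_append:
  assumes "n \<le> length s" "length p = n" "take (n - 1) s = take (n - 1) p"
  shows "windows n (s @ p) = windows n s \<union> windows n p"
proof -
  have "{..<length (s @ p)} = {..<length s} \<union> (\<lambda>u. length s + u) ` {..<n}"
  proof (intro equalityI subsetI)
    fix x assume "x \<in> {..<length (s @ p)}"
    then show "x \<in> {..<length s} \<union> (\<lambda>u. length s + u) ` {..<n}"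
      using assms(2) by (cases "x < length s") (auto intro: image_eqI[of _ _ "x - length s"])
  qed (use assms(2) in auto)
  then have "windows n (s @ p) =
      window (s @ p) n ` {..<length s} \<union> (\<lambda>u. window (s @ p) n (length s + u)) ` {..<n}"
    by (simp add: windows_def image_Un image_image)
  also have "\<dots> = windows n s \<union> windows n p"
    using window_append_left[OF assms] window_append_right[OF assms] assms(2)
    by (simp add: windows_def)
  finally show ?thesis .
qed

lemma take_rotate_eq_if_differ_at:
  assumes "length z = n" "length z' = n" "q < n" "\<forall>t<n. t \<noteq> q \<longrightarrow> z ! t = z' ! t"
  shows "take (n - 1) (rotate (q + 1) z) = take (n - 1) (rotate (q + 1) z')"
proof -
  have "rotate (q + 1) z ! i = rotate (q + 1) z' ! i" if "i < n - 1" for i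
  proof -
    have "(q + 1 + i) mod n \<noteq> q" "(q + 1 + i) mod n < n"
      using that assms(3) by (cases "q + 1 + i < n"; simp add: le_mod_geq)+
    then show ?thesis
      using that assms nth_rotate[of i z "q + 1"] nth_rotate[of i z' "q + 1"] by (simp del: rotate_Suc)
  qed
  then show ?thesis using assms by (intro nth_take_lemma) simp_all
qed

lemma periodic_if_rotate_eq:
  assumes "rotate a z = rotate b z" "a < b" "b < length z"
  shows "periodic z"
proof -
  have "z = rotate (length z - a) (rotate a z)"
    using rotate_mod_inverse[of z a] assms(2,3) by simp
  also have "\<dots> = rotate (length z - a + b) z"
    using assms(1) by (simp add: rotate_rotate)
  also have "\<dots> = rotate (b - a) z"
  proof -
    have "length z - a + b = b - a + length z" using assms(2,3) by simp
    moreover have "rotate (length z) z = z" by simp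
    ultimately show ?thesis by (metis rotate_rotate)
  qed
  finally have "rotate (b - a) z = z" ..
  moreover have "0 < b - a" "b - a < length z" using assms(2,3) by simp_all
  ultimately show ?thesis unfolding periodic_def by blast
qed

lemma card_rots_if_not_periodic:
  assumes "\<not> periodic z" "z \<noteq> []" shows "card (rots z) = length z"
proof -
  have "inj_on (\<lambda>t. rotate t z) {..<length z}"
  proof (rule inj_onI, rule ccontr)
    fix a b assume "a \<in> {..<length z}" "b \<in> {..<length z}" "rotate a z = rotate b z" "a \<noteq> b"
    then show False
      using assms(1) periodic_if_rotate_eq[of a z b] periodic_if_rotate_eq[of b z a]
      by (auto simp: linorder_neq_iff)
  qed
  moreover have "rots z = (\<lambda>t. rotate t z) ` {..<length z}"
    using assms(2) by (auto simp: rots_def intro: image_eqI[of _ _ 0])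
  ultimately show ?thesis by (simp add: card_image)
qed

lemma mem_rev_image_iff: "x \<in> rev ` A \<longleftrightarrow> rev x \<in> A"
  by (metis image_iff rev_rev_ident)

lemma rev_symmetric_rev: "rev_symmetric (rev z) \<longleftrightarrow> rev_symmetric z"
  by (simp add: rev_symmetric_def rots_rev mem_rev_image_iff)

lemma periodic_rev: "periodic (rev z) \<longleftrightarrow> periodic z"
proof -
  have "periodic (rev z)" if per: "periodic z" for z :: "nat list"
  proof -
    obtain d where d: "0 < d" "d < length z" "rotate d z = z" using per unfolding periodic_def by blast
    then have "rotate (length z - d) (rev z) = rev z" by (simp add: rotate_rev)
    then show ?thesis using d unfolding periodic_def by (intro exI[of _ "length z - d"]) auto
  qed
  then show ?thesis by (metis rev_rev_ident)
qed

lemma rev_notin_rots: assumes "\<not> rev_symmetric z" "w \<in> rots z" shows "rev w \<notin> rots z"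
proof
  assume "rev w \<in> rots z"
  moreover have "rev w \<in> rots (rev z)" using assms(2) by (simp add: rots_rev)
  ultimately have "rots z = rots (rev z)" by (metis rots_eq_if_common)
  then show False using assms(1) self_in_rots unfolding rev_symmetric_def by metis
qed

section \<open>Orientable cycles made of necklace classes\<close>

definition rotation_closed :: "nat list set \<Rightarrow> bool" where
  "rotation_closed A \<longleftrightarrow> (\<forall>w\<in>A. rots w \<subseteq> A)"

definition reversal_free :: "nat list set \<Rightarrow> bool" where
  "reversal_free A \<longleftrightarrow> (\<forall>w\<in>A. rev w \<notin> A)"

lemma rotation_closed_Un_rots: "rotation_closed A \<Longrightarrow> rotation_closed (A \<union> rots z)"
  unfolding rotation_closed_def using rots_eq_if_mem by blast

lemma disjoint_rots_if_notin:
  "rotation_closed A \<Longrightarrow> z \<notin> A \<Longrightarrow> A \<inter> rots z = {}"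
  unfolding rotation_closed_def using mem_rots_sym by blast

lemma reversal_free_Un_rots:
  assumes "rotation_closed A" "reversal_free A" "\<not> rev_symmetric z" "rev z \<notin> A"
  shows "reversal_free (A \<union> rots z)"
  unfolding reversal_free_def
proof
  have disjoint: "A \<inter> rots (rev z) = {}" using disjoint_rots_if_notin assms(1,4) by blast
  fix w assume "w \<in> A \<union> rots z"
  then show "rev w \<notin> A \<union> rots z"
  proof
    assume "w \<in> A"
    then have "rev w \<notin> rots z" using disjoint by (auto simp: rots_rev mem_rev_image_iff)
    then show ?thesis using \<open>w \<in> A\<close> assms(2) by (auto simp: reversal_free_def)
  next
    assume "w \<in> rots z"
    then have "rev w \<in> rots (rev z)" by (simp add: rots_rev)
    then show ?thesis using disjoint rev_notin_rots[OF assms(3) \<open>w \<in> rots z\<close>] by blast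
  qed
qed

definition closed_orientable :: "nat \<Rightarrow> nat \<Rightarrow> nat list \<Rightarrow> bool" where
  "closed_orientable k n s \<longleftrightarrow> (\<forall>x\<in>set s. x < k) \<and> n \<le> length s \<and>
     card (windows n s) = length s \<and> rotation_closed (windows n s) \<and> reversal_free (windows n s)"

lemma orientable_if_closed_orientable:
  assumes "closed_orientable k n s" shows "orientable k n s"
proof -
  let ?ws = "map (window s n) [0..<length s]"
  have set_ws: "set ?ws = windows n s" by (rule set_map_window)
  have "distinct ?ws"
    using assms by (intro card_distinct) (simp add: set_ws closed_orientable_def del: set_map)
  moreover have "rev w \<notin> set ?ws" if "w \<in> set ?ws" for w
    using that assms unfolding set_ws by (simp add: closed_orientable_def reversal_free_def)
  then have "set ?ws \<inter> set (map rev ?ws) = {}" by fastforce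
  ultimately have "distinct (?ws @ map rev ?ws)" by (simp add: distinct_map inj_on_def)
  then show ?thesis using assms unfolding orientable_def closed_orientable_def Let_def by blast
qed

lemma orientable_length_le:
  assumes "orientable k n s" shows "2 * length s \<le> k ^ n"
proof -
  let ?ws = "map (window s n) [0..<length s]"
  have "distinct (?ws @ map rev ?ws)" and alphabet: "\<forall>x\<in>set s. x < k"
    using assms unfolding orientable_def Let_def by blast+
  moreover have "window s n t \<in> strings k n" if "t < length s" for t
    using windows_subset_strings[OF alphabet] that by (auto simp: windows_def)
  then have "set (?ws @ map rev ?ws) \<subseteq> strings k n" by (auto intro: rev_in_strings)
  ultimately show ?thesis
    by (metis card_mono card_strings distinct_card finite_strings length_append length_map
        length_upt minus_nat.diff_0 mult_2)
qed

lemma finite_orientable_lengths: "finite {length s | s. orientable k n s}"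
  by (rule finite_subset[of _ "{..k ^ n}"]) (auto dest: orientable_length_le)

lemma length_le_M_k: "orientable k n s \<Longrightarrow> length s \<le> M_k k n"
  unfolding M_k_def by (rule Max_ge[OF finite_orientable_lengths]) blast

lemma M_k_double_le: "2 * M_k k n \<le> k ^ n"
proof -
  have "orientable k n []" by (simp add: orientable_def)
  then have "M_k k n \<in> {length s | s. orientable k n s}"
    unfolding M_k_def by (intro Max_in[OF finite_orientable_lengths]) blast
  then show ?thesis using orientable_length_le by auto
qed

lemma closed_orientable_if_windows_eq_Un_rots:
  assumes "\<forall>x\<in>set s. x < k" "n \<le> length s" "windows n s = A \<union> rots z" "length s = card A + n"
    and "finite A" "rotation_closed A" "reversal_free A"
    and "length z = n" "0 < n" "\<not> rev_symmetric z" "\<not> periodic z" "z \<notin> A" "rev z \<notin> A"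
  shows "closed_orientable k n s"
proof -
  have "card (windows n s) = card A + card (rots z)"
    unfolding assms(3) using assms(5,6,12) disjoint_rots_if_notin
    by (intro card_Un_disjoint) (simp_all add: finite_rots)
  also have "card (rots z) = n" using assms(8-11) card_rots_if_not_periodic by force
  finally have "card (windows n s) = length s" using assms(4) by simp
  moreover have "rotation_closed (windows n s)" using assms(3,6) rotation_closed_Un_rots by simp
  moreover have "reversal_free (windows n s)"
    using assms(3,6,7,10,13) reversal_free_Un_rots by simp
  ultimately show ?thesis using assms(1,2) unfolding closed_orientable_def by simp
qed

lemma closed_orientable_rots:
  assumes "z \<in> strings k n" "0 < n" "\<not> rev_symmetric z" "\<not> periodic z"
  shows "closed_orientable k n z"
  using assms windows_eq_rots[of z n]
  by (intro closed_orientable_if_windows_eq_Un_rots[where A = "{}"])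
    (simp_all add: strings_def rotation_closed_def reversal_free_def)

lemma splice_rots_into_windows:
  assumes "closed_orientable k n s" "0 < n" "z' \<in> windows n s" "length z = n" "length z' = n"
    and "q < n" "\<forall>t<n. t \<noteq> q \<longrightarrow> z ! t = z' ! t"
  shows "\<exists>s'. set s' \<subseteq> set s \<union> set z \<and> length s' = length s + n \<and>
    windows n s' = windows n s \<union> rots z"
proof -
  have s: "n \<le> length s" "rotation_closed (windows n s)"
    using assms(1) by (simp_all add: closed_orientable_def)
  then have "0 < length s" using assms(2) by linarith
  define r where "r = rotate (q + 1) z'"
  have "r \<in> windows n s"
    using s(2) assms(3) rotate_in_rots[of "q + 1" z'] unfolding rotation_closed_def r_def by blast
  then obtain t where "window s n t = r" by (auto simp: windows_def)
  \<comment> \<open>Rotate s so that it starts with r; r and the rotation p of z agree in their first n - 1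
     letters, so p can be appended without creating windows other than the rotations of z.\<close>
  define s1 p where "s1 = rotate t s" and "p = rotate (q + 1) z"
  have "window s1 n 0 = r"
    using \<open>window s n t = r\<close> window_rotate[OF \<open>0 < length s\<close>, of t n 0] by (simp add: s1_def)
  then have "take (n - 1) s1 = take (n - 1) r"
    using s(1) window_0_eq_take[of n s1] by (simp add: s1_def)
  also have "\<dots> = take (n - 1) p"
    unfolding r_def p_def using assms(4-7) by (intro take_rotate_eq_if_differ_at) auto
  moreover have "length p = n" using assms(4) by (simp add: p_def)
  ultimately have "windows n (s1 @ p) = windows n s1 \<union> windows n p"
    using s(1) by (intro windows_append) (simp_all add: s1_def)
  also have "\<dots> = windows n s \<union> rots z"
  proof -
    have "windows n s1 = windows n s" using \<open>0 < length s\<close> by (simp add: s1_def windows_rotate)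
    moreover have "rots p = rots z" unfolding p_def by (rule rots_eq_if_mem[OF rotate_in_rots])
    ultimately show ?thesis using windows_eq_rots[OF \<open>length p = n\<close> assms(2)] by simp
  qed
  finally show ?thesis
    using \<open>length p = n\<close> by (intro exI[of _ "s1 @ p"]) (auto simp: s1_def p_def)
qed

lemma closed_orientable_extend:
  assumes "closed_orientable k n s" "0 < n" "z' \<in> windows n s" "length z' = n"
    and "q < n" "\<forall>t<n. t \<noteq> q \<longrightarrow> z ! t = z' ! t"
    and "z \<in> strings k n" "\<not> rev_symmetric z" "\<not> periodic z"
    and "z \<notin> windows n s" "rev z \<notin> windows n s"
  shows "\<exists>s'. closed_orientable k n s' \<and> length s' = length s + n \<and> windows n s \<subseteq> windows n s'"
proof -
  have z: "length z = n" "\<forall>x\<in>set z. x < k" using assms(7) by (simp_all add: strings_def)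
  obtain s' where s': "set s' \<subseteq> set s \<union> set z" "length s' = length s + n"
    "windows n s' = windows n s \<union> rots z"
    using splice_rots_into_windows[OF assms(1-3) z(1) assms(4-6)] by blast
  have "closed_orientable k n s'"
  proof (rule closed_orientable_if_windows_eq_Un_rots[OF _ _ s'(3)])
    show "\<forall>x\<in>set s'. x < k" using s'(1) z(2) assms(1) by (auto simp: closed_orientable_def)
  qed (use assms z s'(2) in \<open>auto simp: closed_orientable_def finite_windows\<close>)
  then show ?thesis using s' by blast
qed

lemma windows_absorb_single_change:
  assumes closed: "closed_orientable k n s" "0 < n"
    and maximal: "\<And>s'. closed_orientable k n s' \<Longrightarrow> windows n s \<subseteq> windows n s' \<Longrightarrow>
      length s' \<le> length s"
    and z': "z' \<in> windows n s \<union> rev ` windows n s" "length z' = n"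
    and differ: "q < n" "\<forall>t<n. t \<noteq> q \<longrightarrow> z ! t = z' ! t"
    and z: "z \<in> strings k n" "\<not> rev_symmetric z" "\<not> periodic z"
  shows "z \<in> windows n s \<union> rev ` windows n s"
proof (rule ccontr)
  assume "z \<notin> windows n s \<union> rev ` windows n s"
  then have out: "z \<notin> windows n s" "rev z \<notin> windows n s" by (auto simp: mem_rev_image_iff)
  have "\<exists>s'. closed_orientable k n s' \<and> length s' = length s + n \<and> windows n s \<subseteq> windows n s'"
  proof (cases "z' \<in> windows n s")
    case True
    show ?thesis by (rule closed_orientable_extend[OF closed True z'(2) differ z out])
  next
    case False
    then have "rev z' \<in> windows n s" using z'(1) by (auto simp: mem_rev_image_iff)
    moreover have "n - 1 - q < n" using differ(1) by simp
    moreover have "\<forall>t<n. t \<noteq> n - 1 - q \<longrightarrow> rev z ! t = rev z' ! t"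
      using differ z(1) z'(2) by (auto simp: rev_nth strings_def)
    ultimately show ?thesis
      using closed_orientable_extend[OF closed _ _ _ _ rev_in_strings[OF z(1)]] out z'(2) z
      by (simp add: rev_symmetric_rev periodic_rev)
  qed
  then obtain s' where "closed_orientable k n s'" "length s' = length s + n" "windows n s \<subseteq> windows n s'"
    by blast
  then show False using maximal closed(2) by force
qed

lemma exists_longest_closed_orientable:
  assumes "h \<in> strings k n" "0 < n" "\<not> rev_symmetric h" "\<not> periodic h"
  obtains s where "closed_orientable k n s" "h \<in> windows n s"
    "\<And>s'. closed_orientable k n s' \<Longrightarrow> h \<in> windows n s' \<Longrightarrow> length s' \<le> length s"
proof -
  define P where "P L \<longleftrightarrow> (\<exists>s. closed_orientable k n s \<and> h \<in> windows n s \<and> length s = L)" for L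
  have "length h = n" using assms(1) by (simp add: strings_def)
  then have "h \<in> windows n h" using windows_eq_rots[of h n] assms(2) self_in_rots by simp
  then have start: "P n"
    using closed_orientable_rots[OF assms] \<open>length h = n\<close> unfolding P_def by blast
  have bounded: "\<forall>L. P L \<longrightarrow> L \<le> k ^ n"
  proof (intro allI impI)
    fix L assume "P L"
    then obtain s where s: "closed_orientable k n s" "length s = L" unfolding P_def by blast
    show "L \<le> k ^ n" using orientable_length_le[OF orientable_if_closed_orientable[OF s(1)]] s(2) by linarith
  qed
  obtain L where "P L" and greatest: "\<forall>L'. P L' \<longrightarrow> L' \<le> L"
    using Nat.ex_has_greatest_nat[OF start bounded] by blast
  then obtain s where s: "closed_orientable k n s" "h \<in> windows n s" "length s = L"
    unfolding P_def by blast
  moreover have "length s' \<le> length s" if "closed_orientable k n s'" "h \<in> windows n s'" for s'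
  proof -
    have "P (length s')" using that unfolding P_def by blast
    then show ?thesis using greatest s(3) by simp
  qed
  ultimately show ?thesis using that by blast
qed

lemma nondegenerate_mem_windows:
  assumes "3 \<le> k" "closed_orientable k n s" "0 < n" "map seed [0..<n] \<in> windows n s"
    and longest: "\<And>s'. closed_orientable k n s' \<Longrightarrow> windows n s \<subseteq> windows n s' \<Longrightarrow>
      length s' \<le> length s"
    and w: "w \<in> strings k n - degenerate k n"
  shows "w \<in> windows n s \<union> rev ` windows n s"
proof -
  have len: "length w = n" using w by (simp add: strings_def)
  have good: "seeded j w \<in> strings k n \<and> \<not> rev_symmetric (seeded j w) \<and> \<not> periodic (seeded j w)"
    if "j \<le> n" for j
    using that w seeded_in_strings[OF assms(1)] unfolding degenerate_def by blast
  have "seeded (n - m) w \<in> windows n s \<union> rev ` windows n s" if "m \<le> n" for m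
    using that
  proof (induction m)
    case 0
    then show ?case using assms(4) seeded_length[of w] len by simp
  next
    case (Suc m)
    show ?case
    proof (rule windows_absorb_single_change[OF assms(2,3) longest])
      show "seeded (n - m) w \<in> windows n s \<union> rev ` windows n s" using Suc by simp
      show "\<forall>t<n. t \<noteq> n - Suc m \<longrightarrow> seeded (n - Suc m) w ! t = seeded (n - m) w ! t"
        using Suc.prems len by (auto simp: nth_seeded)
    qed (use Suc.prems len good in \<open>simp_all add: length_seeded\<close>)
  qed
  from this[of n] show ?thesis by (simp add: seeded_0)
qed

lemma card_nondegenerate_le_double_M_k:
  assumes "3 \<le> k" "0 < n"
  shows "card (strings k n - degenerate k n) \<le> 2 * M_k k n"
proof (cases "strings k n - degenerate k n = {}")
  case False
  define h where "h = map seed [0..<n]"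
  obtain w0 where w0: "w0 \<in> strings k n - degenerate k n" using False by blast
  then have "seeded n w0 = h" using seeded_length[of w0] by (simp add: strings_def h_def)
  then have "h \<in> strings k n" "\<not> rev_symmetric h" "\<not> periodic h"
    using w0 seeded_in_strings[OF assms(1)] unfolding degenerate_def by force+
  then obtain s where s: "closed_orientable k n s" "h \<in> windows n s"
    and longest:
      "\<And>s'. closed_orientable k n s' \<Longrightarrow> h \<in> windows n s' \<Longrightarrow> length s' \<le> length s"
    using exists_longest_closed_orientable assms(2) by metis
  have "strings k n - degenerate k n \<subseteq> windows n s \<union> rev ` windows n s"
    using nondegenerate_mem_windows[OF assms(1) s(1) assms(2) s(2)[unfolded h_def]] longest s(2) by blast
  then have "card (strings k n - degenerate k n) \<le> card (windows n s \<union> rev ` windows n s)"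
    by (intro card_mono) (simp_all add: finite_windows)
  also have "\<dots> \<le> card (windows n s) + card (rev ` windows n s)" by (rule card_Un_le)
  also have "\<dots> \<le> 2 * length s"
    using s(1) card_image_le[OF finite_windows, of rev n s] by (simp add: closed_orientable_def)
  also have "\<dots> \<le> 2 * M_k k n"
    using length_le_M_k[OF orientable_if_closed_orientable[OF s(1)]] by simp
  finally show ?thesis .
qed (metis card.empty zero_le)

lemma power_le_M_k_plus_degenerate:
  assumes "3 \<le> k" "0 < n"
  shows "k ^ n \<le> 2 * M_k k n + card (degenerate k n)"
proof -
  have "strings k n = (strings k n - degenerate k n) \<union> degenerate k n"
    by (auto simp: degenerate_def)
  then have "k ^ n \<le> card (strings k n - degenerate k n) + card (degenerate k n)"
    by (metis card_Un_le card_strings)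
  then show ?thesis using card_nondegenerate_le_double_M_k[OF assms] by linarith
qed

section \<open>Asymptotics\<close>

lemma degenerate_bound_over_power_tendsto_zero:
  assumes k: "1 < k"
  shows "(\<lambda>n. real ((n + 1) * (2 * n + 1) * k ^ (n div 2 + 3)) / real k ^ n) \<longlonglongrightarrow> 0"
proof -
  define r where "r = root 4 (real k)"
  have kpos: "0 < real k" using k by simp
  have r4: "r ^ 4 = real k" unfolding r_def using kpos by (simp add: real_root_pow_pos)
  have r1: "1 < r" unfolding r_def using k by simp
  have rpos: "0 < r" using r1 by simp
  define g where "g n = 6 * real k ^ 3 * (real n / r ^ n) ^ 2" for n
  have "(\<lambda>n. real n / r ^ n) \<longlonglongrightarrow> 0" using lim_n_over_pown[of r] r1 by simp
  then have "(\<lambda>n. (real n / r ^ n) ^ 2) \<longlonglongrightarrow> 0" using tendsto_power[of _ 0 _ 2] by simp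
  then have g0: "g \<longlonglongrightarrow> 0" unfolding g_def by (rule tendsto_mult_right_zero)
  have bnd: "real ((n + 1) * (2 * n + 1) * k ^ (n div 2 + 3)) / real k ^ n \<le> g n" if n1: "1 \<le> n" for n
  proof -
    define m where "m = n div 2"
    have kn: "real k ^ n = real k ^ m * real k ^ (n - m)"
      by (simp add: m_def power_add[symmetric])
    have "2 * n \<le> 4 * (n - m)" unfolding m_def by linarith
    then have "r ^ (2 * n) \<le> r ^ (4 * (n - m))" using r1 by (intro power_increasing) simp_all
    also have "\<dots> = real k ^ (n - m)" by (simp add: power_mult r4)
    finally have rk: "r ^ (2 * n) \<le> real k ^ (n - m)" .
    have "n \<le> n * n" "1 \<le> n * n" using n1 by simp_all
    moreover have "(n + 1) * (2 * n + 1) = 2 * (n * n) + 3 * n + 1" by (simp add: algebra_simps)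
    ultimately have "(n + 1) * (2 * n + 1) \<le> 6 * n ^ 2" unfolding power2_eq_square by linarith
    then have poly: "real ((n + 1) * (2 * n + 1)) \<le> 6 * real n ^ 2"
      by (metis of_nat_le_iff of_nat_mult of_nat_numeral of_nat_power)
    have "real ((n + 1) * (2 * n + 1) * k ^ (n div 2 + 3)) / real k ^ n
        = real ((n + 1) * (2 * n + 1)) * real k ^ 3 / real k ^ (n - m)"
      using kpos by (simp add: kn m_def power_add field_simps)
    also have "\<dots> \<le> real ((n + 1) * (2 * n + 1)) * real k ^ 3 / r ^ (2 * n)"
      using rk rpos kpos by (intro divide_left_mono) simp_all
    also have "\<dots> \<le> 6 * real n ^ 2 * real k ^ 3 / r ^ (2 * n)"
      using poly rpos kpos by (intro divide_right_mono mult_right_mono) simp_all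
    also have "\<dots> = g n" by (simp add: g_def power_mult power_divide field_simps power2_eq_square)
    finally show ?thesis .
  qed
  show ?thesis
  proof (rule tendsto_sandwich[OF _ _ tendsto_const g0])
    show "\<forall>\<^sub>F n in sequentially. 0 \<le> real ((n + 1) * (2 * n + 1) * k ^ (n div 2 + 3)) / real k ^ n"
      by simp
    show "\<forall>\<^sub>F n in sequentially. real ((n + 1) * (2 * n + 1) * k ^ (n div 2 + 3)) / real k ^ n \<le> g n"
      using bnd by (intro eventually_sequentiallyI[of 1]) simp
  qed
qed

lemma degenerate_density_tendsto_zero:
  assumes "1 < k"
  shows "(\<lambda>n. real (card (degenerate k n)) / real k ^ n) \<longlonglongrightarrow> 0"
proof (rule tendsto_sandwich[OF _ _ tendsto_const degenerate_bound_over_power_tendsto_zero[OF assms]])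
  have "real (card (degenerate k n)) \<le> real ((n + 1) * (2 * n + 1) * k ^ (n div 2 + 3))" for n
    using card_degenerate_le[of k n] assms by (intro of_nat_mono) simp
  then show "\<forall>\<^sub>F n in sequentially. real (card (degenerate k n)) / real k ^ n
      \<le> real ((n + 1) * (2 * n + 1) * k ^ (n div 2 + 3)) / real k ^ n"
    by (intro always_eventually allI divide_right_mono) simp_all
qed simp

lemma relative_gap_le:
  fixes N M L D :: real
  assumes "2 * M \<le> N" "2 * L \<le> N" "N \<le> 2 * M + D" "N \<le> 2 * L + D" "D < N"
  shows "\<bar>(M - L) / L\<bar> \<le> (D / N) / (1 - D / N)"
proof -
  have "\<bar>M - L\<bar> \<le> D / 2" using assms unfolding abs_le_iff by linarith
  moreover have "0 \<le> D / 2" using assms by linarith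
  moreover have "0 < (N - D) / 2" using assms by simp
  moreover have "(N - D) / 2 \<le> L" using assms by simp
  ultimately have "\<bar>(M - L) / L\<bar> \<le> (D / 2) / ((N - D) / 2)"
    unfolding abs_divide by (intro frac_le) auto
  also have "\<dots> = (D / N) / (1 - D / N)" using assms by (simp add: field_simps)
  finally show ?thesis .
qed

lemma relative_gap_le_degenerate_density:
  fixes k n :: nat
  defines "e \<equiv> real (card (degenerate k n)) / real k ^ n"
  assumes "3 \<le> k" "0 < n" "e < 1"
  shows "\<bar>(real (M_k k n) - real (L_k k n)) / real (L_k k n)\<bar> \<le> e / (1 - e)"
proof (unfold e_def, rule relative_gap_le)
  have "0 < real k ^ n" using assms(2) by simp
  then show "real (card (degenerate k n)) < real k ^ n" using assms(4) by (simp add: e_def divide_simps)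
  show "2 * real (M_k k n) \<le> real k ^ n"
    using of_nat_mono[OF M_k_double_le, where 'a = real] by simp
  show "2 * real (L_k k n) \<le> real k ^ n"
    using of_nat_mono[OF L_k_double_le, where 'a = real] by simp
  show "real k ^ n \<le> 2 * real (M_k k n) + real (card (degenerate k n))"
    using of_nat_mono[OF power_le_M_k_plus_degenerate[OF assms(2,3)], where 'a = real] by simp
  show "real k ^ n \<le> 2 * real (L_k k n) + real (card (degenerate k n))"
    using of_nat_mono[OF power_le_L_k_plus_degenerate, where 'a = real] by simp
qed

theorem mainTheorem12:
  fixes k :: nat
  assumes "k \<ge> 3"
  shows "(\<lambda>n. (real (M_k k n) - real (L_k k n)) / real (L_k k n)) \<longlonglongrightarrow> 0"
proof -
  define e where "e n = real (card (degenerate k n)) / real k ^ n" for n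
  have e: "e \<longlonglongrightarrow> 0" unfolding e_def using assms by (intro degenerate_density_tendsto_zero) simp
  have lim: "(\<lambda>n. e n / (1 - e n)) \<longlonglongrightarrow> 0"
    using tendsto_divide[OF e tendsto_diff[OF tendsto_const e]] by simp
  have "\<forall>\<^sub>F n in sequentially. e n < 1" using e by (rule order_tendstoD) simp
  then have bound: "\<forall>\<^sub>F n in sequentially.
      norm ((real (M_k k n) - real (L_k k n)) / real (L_k k n)) \<le> norm (e n / (1 - e n)) * 1"
    using eventually_gt_at_top[of 0]
  proof eventually_elim
    case (elim n)
    then have "\<bar>(real (M_k k n) - real (L_k k n)) / real (L_k k n)\<bar> \<le> e n / (1 - e n)"
      using relative_gap_le_degenerate_density[OF assms] by (simp add: e_def)
    then show ?case by (metis abs_ge_self mult_1_right order_trans real_norm_def)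
  qed
  show ?thesis by (rule tendsto_0_le[OF lim bound])
qed

end
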